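(* Let $C>0$, $\mathbf{w}^t\in\mathbb{R}^d$, let $\theta_1^t\le\dots\le\theta_{K-1}^t$ be real thresholds, $\mathbf{x}^t\in\mathbb{R}^d$ and integers $1\le y_l^t\le y_r^t\le K$; let $I_t=\{1,\dots,y_l^t-1\}\cup\{y_r^t,\dots,K-1\}$. Let $(\mathbf{w}^{t+1},\boldsymbol\theta^{t+1})$ be the PA-I update, i.e. the $(\mathbf{w},\boldsymbol\theta)$-part of the minimizer over $\mathbf{w}\in\mathbb{R}^d$, $\boldsymbol\theta\in\mathbb{R}^{K-1}$, $(\xi_i)_{i\in I_t}$ of $$\tfrac12\Vert\mathbf{w}-\mathbf{w}^t\Vert^2+\tfrac12\Vert\boldsymbol\theta-\boldsymbol\theta^t\Vert^2+C\sum_{i\in I_t}\xi_i$$ subject to $\mathbf{w}\cdot\mathbf{x}^t-\theta_i\ge 1-\xi_i$ for $i=1,\dots,y_l^t-1$, $\mathbf{w}\cdot\mathbf{x}^t-\theta_i\le -1+\xi_i$ for $i=y_r^t,\dots,K-1$, and $\xi_i\ge 0$ for $i\in I_t$. Then $\theta_1^{t+1}\le\theta_2^{t+1}\le\dots\le\theta_{K-1}^{t+1}$.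
   Context: Online ranking into $K$ ordered classes with interval labels $[y_l^t,y_r^t]$: a ranker is $(\mathbf{w},\boldsymbol\theta)$, $\boldsymbol\theta=(\theta_1,\dots,\theta_{K-1})$, predicting $\min\{i:\mathbf{w}\cdot\mathbf{x}-\theta_i<0\}$ with $\theta_K=\infty$. PA-I is the passive-aggressive variant with aggressiveness parameter $C$ that at each trial computes the exact solution of the stated convex program. *)

theory Defs
  imports "HOL-Analysis.Analysis"
begin

definition PA_I_idx :: "nat \<Rightarrow> nat \<Rightarrow> nat \<Rightarrow> nat set" where
  "PA_I_idx K yl yr = {1..yl - 1} \<union> {yr..K - 1}"

definition PA_feasible ::
  "nat \<Rightarrow> real^'d \<Rightarrow> nat \<Rightarrow> nat \<Rightarrow> real^'d \<Rightarrow> (nat \<Rightarrow> real) \<Rightarrow> (nat \<Rightarrow> real) \<Rightarrow> bool" where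
  "PA_feasible K x yl yr w \<theta> \<xi> \<longleftrightarrow>
     (\<forall>i\<in>{1..yl - 1}. w \<bullet> x - \<theta> i \<ge> 1 - \<xi> i) \<and>
     (\<forall>i\<in>{yr..K - 1}. w \<bullet> x - \<theta> i \<le> -1 + \<xi> i) \<and>
     (\<forall>i\<in>PA_I_idx K yl yr. \<xi> i \<ge> 0)"

definition PA_objective ::
  "real \<Rightarrow> nat \<Rightarrow> nat \<Rightarrow> nat \<Rightarrow> real^'d \<Rightarrow> (nat \<Rightarrow> real) \<Rightarrow> real^'d \<Rightarrow> (nat \<Rightarrow> real) \<Rightarrow> (nat \<Rightarrow> real) \<Rightarrow> real" where
  "PA_objective C K yl yr wt \<theta>t w \<theta> \<xi> =
     (1/2) * (norm (w - wt))\<^sup>2 + (1/2) * (\<Sum>i\<in>{1..K - 1}. (\<theta> i - \<theta>t i)\<^sup>2)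
     + C * (\<Sum>i\<in>PA_I_idx K yl yr. \<xi> i)"

definition PA_I_minimizer ::
  "real \<Rightarrow> nat \<Rightarrow> real^'d \<Rightarrow> nat \<Rightarrow> nat \<Rightarrow> real^'d \<Rightarrow> (nat \<Rightarrow> real)
   \<Rightarrow> real^'d \<Rightarrow> (nat \<Rightarrow> real) \<Rightarrow> (nat \<Rightarrow> real) \<Rightarrow> bool" where
  "PA_I_minimizer C K x yl yr wt \<theta>t w \<theta> \<xi> \<longleftrightarrow>
     PA_feasible K x yl yr w \<theta> \<xi> \<and>
     (\<forall>w' \<theta>' \<xi>'. PA_feasible K x yl yr w' \<theta>' \<xi>' \<longrightarrow>
        PA_objective C K yl yr wt \<theta>t w \<theta> \<xi> \<le> PA_objective C K yl yr wt \<theta>t w' \<theta>' \<xi>')"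

end

theory Submission
  imports Defs
begin

text \<open>If an optimal threshold vector had an inversion \<open>\<theta> (i+1) < \<theta> i\<close>, replace both thresholds by
  their midpoint. Since \<open>\<theta>t\<close> is sorted, this strictly decreases the distance to \<open>\<theta>t\<close>. The point
  stays feasible: if \<open>i\<close> and \<open>i+1\<close> lie in the same block of constraints, averaging their slacks
  too preserves both constraints and the total slack; otherwise \<open>i\<close> can only be constrained from
  above and \<open>i+1\<close> only from below, so lowering \<open>\<theta> i\<close> and raising \<open>\<theta> (i+1)\<close> is harmless.
  The new point is strictly better, contradicting optimality.\<close>

lemma sum_fun_upd:
  fixes g :: "'a \<Rightarrow> 'b \<Rightarrow> 'c::ab_group_add"
  assumes "finite S" "i \<in> S"
  shows "(\<Sum>j\<in>S. g j ((f(i := a)) j)) = (\<Sum>j\<in>S. g j (f j)) - g i (f i) + g i a"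
proof -
  have "(\<Sum>j\<in>S - {i}. g j ((f(i := a)) j)) = (\<Sum>j\<in>S - {i}. g j (f j))"
    by (rule sum.cong) auto
  then show ?thesis
    using assms by (simp add: sum.remove)
qed

lemma midpoint_sq_dist_less:
  fixes a b p q :: real
  assumes "p \<le> q" "b < a"
  shows "((a + b)/2 - p)\<^sup>2 + ((a + b)/2 - q)\<^sup>2 < (a - p)\<^sup>2 + (b - q)\<^sup>2"
proof -
  have "(a - p)\<^sup>2 + (b - q)\<^sup>2 - ((a + b)/2 - p)\<^sup>2 - ((a + b)/2 - q)\<^sup>2
      = (a - b)\<^sup>2 / 2 + (a - b) * (q - p)"
    by (simp add: power2_eq_square field_simps)
  moreover have "(a - b) * (q - p) \<ge> 0" "(a - b)\<^sup>2 > 0"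
    using assms by auto
  ultimately show ?thesis by linarith
qed

lemma PA_objective_midpoint_less:
  assumes "1 \<le> i" "i < K - 1" "\<theta>t i \<le> \<theta>t (i + 1)" "\<theta> (i + 1) < \<theta> i"
    and "(\<Sum>j\<in>PA_I_idx K yl yr. \<xi>' j) = (\<Sum>j\<in>PA_I_idx K yl yr. \<xi> j)"
  defines "c \<equiv> (\<theta> i + \<theta> (i + 1)) / 2"
  shows "PA_objective C K yl yr wt \<theta>t w (\<theta>(i := c, i + 1 := c)) \<xi>'
       < PA_objective C K yl yr wt \<theta>t w \<theta> \<xi>"
proof -
  have "(\<Sum>j\<in>{1..K - 1}. ((\<theta>(i := c, i + 1 := c)) j - \<theta>t j)\<^sup>2)
      = (\<Sum>j\<in>{1..K - 1}. (\<theta> j - \<theta>t j)\<^sup>2)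
        - (\<theta> i - \<theta>t i)\<^sup>2 - (\<theta> (i + 1) - \<theta>t (i + 1))\<^sup>2
        + (c - \<theta>t i)\<^sup>2 + (c - \<theta>t (i + 1))\<^sup>2"
    using assms(1,2) sum_fun_upd[of "{1..K - 1}" _ "\<lambda>j v. (v - \<theta>t j)\<^sup>2"]
    by simp
  also have "\<dots> < (\<Sum>j\<in>{1..K - 1}. (\<theta> j - \<theta>t j)\<^sup>2)"
    using midpoint_sq_dist_less[OF assms(3,4)] unfolding c_def by linarith
  finally show ?thesis
    using assms(5) unfolding PA_objective_def by simp
qed

lemma PA_feasible_mono:
  assumes "PA_feasible K x yl yr w \<theta> \<xi>"
    and "\<And>j. j \<in> {1..yl - 1} \<Longrightarrow> \<theta>' j \<le> \<theta> j"
    and "\<And>j. j \<in> {yr..K - 1} \<Longrightarrow> \<theta> j \<le> \<theta>' j"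
  shows "PA_feasible K x yl yr w \<theta>' \<xi>"
  using assms unfolding PA_feasible_def by (meson diff_left_mono order_trans)

lemma PA_feasible_average_pair:
  assumes feas: "PA_feasible K x yl yr w \<theta> \<xi>" and "yl \<le> yr"
    and block: "{i, i + 1} \<subseteq> {1..yl - 1} \<or> {i, i + 1} \<subseteq> {yr..K - 1}"
  defines "c \<equiv> (\<theta> i + \<theta> (i + 1)) / 2" and "m \<equiv> (\<xi> i + \<xi> (i + 1)) / 2"
  shows "PA_feasible K x yl yr w (\<theta>(i := c, i + 1 := c)) (\<xi>(i := m, i + 1 := m))"
proof -
  have lo: "\<And>j. j \<in> {1..yl - 1} \<Longrightarrow> 1 - \<xi> j \<le> w \<bullet> x - \<theta> j"
    and up: "\<And>j. j \<in> {yr..K - 1} \<Longrightarrow> w \<bullet> x - \<theta> j \<le> -1 + \<xi> j"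
    and nn: "\<And>j. j \<in> PA_I_idx K yl yr \<Longrightarrow> 0 \<le> \<xi> j"
    using feas unfolding PA_feasible_def by auto
  have "{1..yl - 1} \<inter> {yr..K - 1} = {}"
    using \<open>yl \<le> yr\<close> by auto
  with block consider
      (lower) "{i, i + 1} \<subseteq> {1..yl - 1}" "i \<notin> {yr..K - 1}" "i + 1 \<notin> {yr..K - 1}"
    | (upper) "{i, i + 1} \<subseteq> {yr..K - 1}" "i \<notin> {1..yl - 1}" "i + 1 \<notin> {1..yl - 1}"
    by blast
  then show ?thesis
  proof cases
    case lower
    have "1 - \<xi> i \<le> w \<bullet> x - \<theta> i" "1 - \<xi> (i + 1) \<le> w \<bullet> x - \<theta> (i + 1)" "0 \<le> \<xi> i" "0 \<le> \<xi> (i + 1)"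
      using lower lo nn unfolding PA_I_idx_def by auto
    then have "1 - m \<le> w \<bullet> x - c" "0 \<le> m"
      unfolding c_def m_def by (auto simp: field_simps)
    with lower feas show ?thesis
      unfolding PA_feasible_def PA_I_idx_def by auto
  next
    case upper
    have "w \<bullet> x - \<theta> i \<le> -1 + \<xi> i" "w \<bullet> x - \<theta> (i + 1) \<le> -1 + \<xi> (i + 1)" "0 \<le> \<xi> i" "0 \<le> \<xi> (i + 1)"
      using upper up nn unfolding PA_I_idx_def by auto
    then have "w \<bullet> x - c \<le> -1 + m" "0 \<le> m"
      unfolding c_def m_def by (auto simp: field_simps)
    with upper feas show ?thesis
      unfolding PA_feasible_def PA_I_idx_def by auto
  qed
qed

lemma PA_feasible_midpoint:
  assumes feas: "PA_feasible K x yl yr w \<theta> \<xi>" and "yl \<le> yr"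
    and "1 \<le> i" "i < K - 1" and inverted: "\<theta> (i + 1) < \<theta> i"
  defines "c \<equiv> (\<theta> i + \<theta> (i + 1)) / 2"
  obtains \<xi>' where "PA_feasible K x yl yr w (\<theta>(i := c, i + 1 := c)) \<xi>'"
    and "(\<Sum>j\<in>PA_I_idx K yl yr. \<xi>' j) = (\<Sum>j\<in>PA_I_idx K yl yr. \<xi> j)"
proof (cases "{i, i + 1} \<subseteq> {1..yl - 1} \<or> {i, i + 1} \<subseteq> {yr..K - 1}")
  case True
  define m where "m = (\<xi> i + \<xi> (i + 1)) / 2"
  have fin: "finite (PA_I_idx K yl yr)"
    and mem: "i \<in> PA_I_idx K yl yr" "i + 1 \<in> PA_I_idx K yl yr"
    using True unfolding PA_I_idx_def by auto
  have "(\<Sum>j\<in>PA_I_idx K yl yr. (\<xi>(i := m, i + 1 := m)) j) = (\<Sum>j\<in>PA_I_idx K yl yr. \<xi> j)"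
    using sum_fun_upd[OF fin mem(2), where g = "\<lambda>j v. v" and f = "\<xi>(i := m)" and a = m]
      sum_fun_upd[OF fin mem(1), where g = "\<lambda>j v. v" and f = \<xi> and a = m]
    by (simp add: m_def)
  with PA_feasible_average_pair[OF feas \<open>yl \<le> yr\<close> True] show ?thesis
    using that unfolding c_def m_def by blast
next
  case False
  with \<open>1 \<le> i\<close> \<open>i < K - 1\<close> have "i + 1 \<notin> {1..yl - 1}" "i \<notin> {yr..K - 1}"
    by auto
  then have "PA_feasible K x yl yr w (\<theta>(i := c, i + 1 := c)) \<xi>"
    using inverted by (intro PA_feasible_mono[OF feas]) (auto simp: c_def)
  then show ?thesis
    using that by blast
qed

theorem theorem2:
  fixes C :: real and K yl yr :: nat
    and wt x w :: "real^'d" and \<theta>t \<theta> \<xi> :: "nat \<Rightarrow> real"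
  assumes "C > 0"
    and "\<And>i. 1 \<le> i \<Longrightarrow> i < K - 1 \<Longrightarrow> \<theta>t i \<le> \<theta>t (i + 1)"
    and "1 \<le> yl" and "yl \<le> yr" and "yr \<le> K"
    and "PA_I_minimizer C K x yl yr wt \<theta>t w \<theta> \<xi>"
  shows "\<forall>i. 1 \<le> i \<and> i < K - 1 \<longrightarrow> \<theta> i \<le> \<theta> (i + 1)"
proof (rule ccontr)
  assume "\<not> ?thesis"
  then obtain i where i: "1 \<le> i" "i < K - 1" and inverted: "\<theta> (i + 1) < \<theta> i"
    by auto
  have feas: "PA_feasible K x yl yr w \<theta> \<xi>"
    and optimal: "\<And>w' \<theta>' \<xi>'. PA_feasible K x yl yr w' \<theta>' \<xi>' \<Longrightarrow>
        PA_objective C K yl yr wt \<theta>t w \<theta> \<xi> \<le> PA_objective C K yl yr wt \<theta>t w' \<theta>' \<xi>'"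
    using assms(6) unfolding PA_I_minimizer_def by auto
  define c where "c = (\<theta> i + \<theta> (i + 1)) / 2"
  obtain \<xi>' where feas': "PA_feasible K x yl yr w (\<theta>(i := c, i + 1 := c)) \<xi>'"
    and slack: "(\<Sum>j\<in>PA_I_idx K yl yr. \<xi>' j) = (\<Sum>j\<in>PA_I_idx K yl yr. \<xi> j)"
    using PA_feasible_midpoint[OF feas \<open>yl \<le> yr\<close> i inverted] unfolding c_def .
  have "PA_objective C K yl yr wt \<theta>t w (\<theta>(i := c, i + 1 := c)) \<xi>'
      < PA_objective C K yl yr wt \<theta>t w \<theta> \<xi>"
    using PA_objective_midpoint_less[OF i assms(2)[OF i] inverted slack] unfolding c_def .
  with optimal[OF feas'] show False
    by simp
qed

end
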